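(* Let $\mathcal T$ be a BDD theory over a binary signature containing a rule $Q(\bar x,y)\Rightarrow\exists z\,F(y,z)$ with $F$ not occurring elsewhere in $\mathcal T$, such that (a) the head of each existential TGD of $\mathcal T$ has the form $\exists z\,R(y,z)$ and (b) no predicate occurring in the head of an existential TGD (a TGP) occurs in the head of a datalog rule. Let $D$ be a database instance without atoms of $F$, and let $\mathcal S$ be the substructure of $Chase(D,\mathcal T)$ consisting of all elements of $Chase(D,\mathcal T)$, all atoms of $D$ and all atoms of TGPs. Then every atom of $Chase(\mathcal S,\mathcal T)$ is an atom of $Chase(D,\mathcal T)$; in particular the domains of $Chase(\mathcal S,\mathcal T)$, $Chase(D,\mathcal T)$ and $\mathcal S$ coincide.
   Context: A theory is a finite set of existential TGDs $\forall\bar x(\Phi(\bar x)\Rightarrow\exists y\,Q(y,\bar y))$ ($\bar y\subseteq\bar x$) and datalog rules $\forall\bar x(\Phi(\bar x)\Rightarrow Q(\bar y))$. BDD: for each conjunctive query $\Phi$ there is a finite union of conjunctive queries $\Phi'$ with $\mathcal T,D\models\Phi$ iff $D\models\Phi'$ for all database instances $D$. $Chase(I,\mathcal T)$ (for any set of atoms $I$) is the non-oblivious chase: iterate, simultaneously adding heads of datalog rules for all body matches, and for every match of a TGD body whose head has no witness yet, adding a fresh element and the head atom with it as witness; $Chase$ is the union of all stages. *)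

theory Defs
  imports Main
begin

(* Atoms: a predicate symbol applied to a list of arguments. Instances/structures are
   sets of ground atoms; their domain is the active domain. *)
type_synonym ('p,'a) atom = "'p \<times> 'a list"

datatype ('p,'v) rule =
    Datalog "('p,'v) atom list" "('p,'v) atom"
  | TGD "('p,'v) atom list" 'v "('p,'v) atom"

fun body :: "('p,'v) rule \<Rightarrow> ('p,'v) atom list" where
  "body (Datalog B H) = B" | "body (TGD B z H) = B"

fun head :: "('p,'v) rule \<Rightarrow> ('p,'v) atom" where
  "head (Datalog B H) = H" | "head (TGD B z H) = H"

definition atom_vars :: "('p,'v) atom list \<Rightarrow> 'v set" where
  "atom_vars B = (\<Union>at\<in>set B. set (snd at))"

definition bvars :: "('p,'v) rule \<Rightarrow> 'v set" where
  "bvars r = atom_vars (body r)"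

definition preds_rule :: "('p,'v) rule \<Rightarrow> 'p set" where
  "preds_rule r = fst ` set (body r) \<union> {fst (head r)}"

fun wf_rule :: "('p,'v) rule \<Rightarrow> bool" where
  "wf_rule (Datalog B H) = (set (snd H) \<subseteq> atom_vars B)"
| "wf_rule (TGD B z H) = (z \<notin> atom_vars B \<and> z \<in> set (snd H) \<and> set (snd H) \<subseteq> atom_vars B \<union> {z})"

definition binary_sig :: "('p \<Rightarrow> nat) \<Rightarrow> bool" where
  "binary_sig ar \<longleftrightarrow> (\<forall>p. ar p \<le> 2)"

definition over_sig :: "('p \<Rightarrow> nat) \<Rightarrow> ('p,'a) atom set \<Rightarrow> bool" where
  "over_sig ar A \<longleftrightarrow> (\<forall>at\<in>A. length (snd at) = ar (fst at))"

definition rule_over_sig :: "('p \<Rightarrow> nat) \<Rightarrow> ('p,'v) rule \<Rightarrow> bool" where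
  "rule_over_sig ar r \<longleftrightarrow> over_sig ar (set (body r)) \<and> over_sig ar {head r}"

definition theory_over :: "('p \<Rightarrow> nat) \<Rightarrow> ('p,'v) rule set \<Rightarrow> bool" where
  "theory_over ar T \<longleftrightarrow> finite T \<and> (\<forall>r\<in>T. wf_rule r \<and> rule_over_sig ar r)"

definition inst :: "('v \<Rightarrow> 'a) \<Rightarrow> ('p,'v) atom \<Rightarrow> ('p,'a) atom" where
  "inst h at = (fst at, map h (snd at))"

definition matches :: "('v \<Rightarrow> 'a) \<Rightarrow> ('p,'v) atom list \<Rightarrow> ('p,'a) atom set \<Rightarrow> bool" where
  "matches h B I \<longleftrightarrow> (\<forall>at\<in>set B. inst h at \<in> I)"

definition adom :: "('p,'a) atom set \<Rightarrow> 'a set" where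
  "adom I = (\<Union>at\<in>I. set (snd at))"

definition TGPs :: "('p,'v) rule set \<Rightarrow> 'p set" where
  "TGPs T = {p. \<exists>B z args. TGD B z (p, args) \<in> T}"

fun active :: "('p,'a) atom set \<Rightarrow> ('p,'v) rule \<Rightarrow> ('v \<Rightarrow> 'a) \<Rightarrow> bool" where
  "active I (Datalog B H) h = False"
| "active I (TGD B z H) h = (matches h B I \<and> \<not> (\<exists>a. inst (h(z := a)) H \<in> I))"

(* One stage of the non-oblivious chase: simultaneously add all datalog heads for all body
   matches, and for every active TGD trigger a fresh element (distinct triggers, i.e. distinct
   body matches, get distinct fresh elements, none of which is already in the domain) together
   with the head atom witnessed by it. *)
definition chase_step :: "('p,'v) rule set \<Rightarrow> ('p,'a) atom set \<Rightarrow> ('p,'a) atom set \<Rightarrow> bool" where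
  "chase_step T I J \<longleftrightarrow> (\<exists>fr :: ('p,'v) rule \<Rightarrow> ('v \<Rightarrow> 'a) \<Rightarrow> 'a.
     (\<forall>r h. r \<in> T \<and> active I r h \<longrightarrow> fr r h \<notin> adom I) \<and>
     (\<forall>r h r' h'. r \<in> T \<and> active I r h \<and> r' \<in> T \<and> active I r' h' \<longrightarrow>
         (fr r h = fr r' h' \<longleftrightarrow> r = r' \<and> (\<forall>v\<in>bvars r. h v = h' v))) \<and>
     J = I \<union> {inst h H | B H h. Datalog B H \<in> T \<and> matches h B I}
           \<union> {inst (h(z := fr (TGD B z H) h)) H | B z H h. TGD B z H \<in> T \<and> active I (TGD B z H) h})"

definition is_chase :: "('p,'v) rule set \<Rightarrow> ('p,'a) atom set \<Rightarrow> ('p,'a) atom set \<Rightarrow> bool" where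
  "is_chase T I C \<longleftrightarrow> (\<exists>s :: nat \<Rightarrow> ('p,'a) atom set.
     s 0 = I \<and> (\<forall>n. chase_step T (s n) (s (Suc n))) \<and> C = (\<Union>n. s n))"

fun satisfies_rule :: "('p,'a) atom set \<Rightarrow> ('p,'v) rule \<Rightarrow> bool" where
  "satisfies_rule M (Datalog B H) = (\<forall>h. matches h B M \<longrightarrow> inst h H \<in> M)"
| "satisfies_rule M (TGD B z H) = (\<forall>h. matches h B M \<longrightarrow> (\<exists>a. inst (h(z := a)) H \<in> M))"

definition is_model :: "('p,'v) rule set \<Rightarrow> ('p,'a) atom set \<Rightarrow> bool" where
  "is_model T M \<longleftrightarrow> (\<forall>r\<in>T. satisfies_rule M r)"

type_synonym 'p cq = "('p, nat) atom list"

definition sat_cq :: "('p,'a) atom set \<Rightarrow> 'p cq \<Rightarrow> bool" where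
  "sat_cq M q \<longleftrightarrow> (\<exists>h :: nat \<Rightarrow> 'a. matches h q M)"

definition sat_ucq :: "('p,'a) atom set \<Rightarrow> 'p cq list \<Rightarrow> bool" where
  "sat_ucq M Q \<longleftrightarrow> (\<exists>q\<in>set Q. sat_cq M q)"

(* T, D |= q : every model (over the countable domain nat) containing D satisfies q *)
definition entails :: "('p,'v) rule set \<Rightarrow> ('p,nat) atom set \<Rightarrow> 'p cq \<Rightarrow> bool" where
  "entails T D q \<longleftrightarrow> (\<forall>M :: ('p,nat) atom set. D \<subseteq> M \<and> is_model T M \<longrightarrow> sat_cq M q)"

definition BDD :: "('p \<Rightarrow> nat) \<Rightarrow> ('p,'v) rule set \<Rightarrow> bool" where
  "BDD ar T \<longleftrightarrow> (\<forall>q :: 'p cq. over_sig ar (set q) \<longrightarrow>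
     (\<exists>Q :: 'p cq list. \<forall>D :: ('p,nat) atom set. finite D \<and> over_sig ar D \<longrightarrow>
        (entails T D q \<longleftrightarrow> sat_ucq D Q)))"

end

theory Submission
  imports Defs
begin

text \<open>\<open>Chase(D,T)\<close> is a model of \<open>T\<close> containing \<open>S\<close>, and \<open>S\<close> already contains every atom of
  \<open>Chase(D,T)\<close> over a TGP. Hence, chasing \<open>S\<close> inside \<open>Chase(D,T)\<close>, no TGD trigger is ever
  active: its head has a witness in \<open>Chase(D,T)\<close>, which is an atom of \<open>S\<close>. Only datalog rules
  fire, and their conclusions stay in the model \<open>Chase(D,T)\<close>. Conversely, every element of
  \<open>Chase(D,T)\<close> is either in the domain of \<open>D\<close> or introduced as a witness in a TGP atom, since
  datalog heads only use variables of their bodies; so \<open>S\<close> already has the whole domain.\<close>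

lemma adom_mono: "A \<subseteq> B \<Longrightarrow> adom A \<subseteq> adom B"
  unfolding adom_def by blast

lemma matches_mono: "matches h B I \<Longrightarrow> I \<subseteq> J \<Longrightarrow> matches h B J"
  unfolding matches_def by blast

lemma head_pred_in_TGPs: "TGD B z H \<in> T \<Longrightarrow> fst H \<in> TGPs T"
  unfolding TGPs_def by (cases H) auto

lemma chase_step_mono: "chase_step T I J \<Longrightarrow> I \<subseteq> J"
  unfolding chase_step_def by blast

lemma chase_step_atomE:
  assumes "chase_step T I J" "at \<in> J"
  obtains "at \<in> I"
  | B H h where "Datalog B H \<in> T" "matches h B I" "at = inst h H"
  | B z H h c where "TGD B z H \<in> T" "active I (TGD B z H) h" "at = inst (h(z := c)) H"
  using assms unfolding chase_step_def by blast

lemma chase_stages_mono: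
  assumes "\<forall>n. chase_step T (s n) (s (Suc n))"
  shows "mono s"
  using assms chase_step_mono by (intro mono_iff_le_Suc[THEN iffD2]) blast

lemma matches_Union_mono:
  fixes s :: "nat \<Rightarrow> ('p,'a) atom set"
  assumes "mono s" "matches h B (\<Union>n. s n)"
  shows "\<exists>n. matches h B (s n)"
  using assms(2)
proof (induction B)
  case Nil
  then show ?case by (simp add: matches_def)
next
  case (Cons at B)
  then obtain n m where n: "matches h B (s n)" and m: "inst h at \<in> s m"
    by (auto simp: matches_def)
  have "s n \<subseteq> s (max n m)" "s m \<subseteq> s (max n m)"
    using assms(1) by (simp_all add: monoD)
  with n m have "matches h (at # B) (s (max n m))"
    by (auto simp: matches_def)
  then show ?case ..
qed

lemma is_chase_start_subset: "is_chase T I C \<Longrightarrow> I \<subseteq> C"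
  unfolding is_chase_def by (metis UN_upper UNIV_I)

lemma chase_step_datalog:
  "chase_step T I J \<Longrightarrow> Datalog B H \<in> T \<Longrightarrow> matches h B I \<Longrightarrow> inst h H \<in> J"
  unfolding chase_step_def by blast

lemma chase_step_tgd:
  assumes "chase_step T I J" "TGD B z H \<in> T" "matches h B I"
  shows "\<exists>a. inst (h(z := a)) H \<in> J"
proof (cases "active I (TGD B z H) h")
  case True
  with assms(1,2) show ?thesis unfolding chase_step_def by blast
next
  case False
  with assms(3) chase_step_mono[OF assms(1)] show ?thesis by auto
qed

lemma is_chase_model:
  assumes "is_chase T I C"
  shows "is_model T C"
proof -
  obtain s where s: "\<forall>n. chase_step T (s n) (s (Suc n))" "C = (\<Union>n. s n)"
    using assms unfolding is_chase_def by blast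
  have stage: "\<exists>n. matches h B (s n)" if "matches h B C" for h B
    using that matches_Union_mono[OF chase_stages_mono[OF s(1)]] s(2) by blast
  have "satisfies_rule C r" if "r \<in> T" for r
  proof (cases r)
    case (Datalog B H)
    show ?thesis
      using that chase_step_datalog[OF s(1)[rule_format]] stage
      unfolding Datalog s(2) by fastforce
  next
    case (TGD B z H)
    show ?thesis
      using that chase_step_tgd[OF s(1)[rule_format]] stage
      unfolding TGD s(2) by fastforce
  qed
  then show ?thesis
    unfolding is_model_def by blast
qed

lemma chase_step_within_model:
  assumes step: "chase_step T I J" and model: "is_model T M"
    and "I \<subseteq> M" and TGP_atoms: "{at \<in> M. fst at \<in> TGPs T} \<subseteq> I"
  shows "J \<subseteq> M"
proof
  fix at assume "at \<in> J"
  with step show "at \<in> M"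
  proof (cases rule: chase_step_atomE)
    case 1
    with \<open>I \<subseteq> M\<close> show ?thesis by blast
  next
    case (2 B H h)
    then have "satisfies_rule M (Datalog B H)"
      using model unfolding is_model_def by blast
    with 2 matches_mono[OF _ \<open>I \<subseteq> M\<close>] show ?thesis by auto
  next
    case (3 B z H h c)
    then have "matches h B M"
      using matches_mono[OF _ \<open>I \<subseteq> M\<close>] by auto
    moreover have "satisfies_rule M (TGD B z H)"
      using model 3 unfolding is_model_def by blast
    ultimately obtain a where "inst (h(z := a)) H \<in> M"
      by auto
    moreover have "fst (inst (h(z := a)) H) \<in> TGPs T"
      using head_pred_in_TGPs[OF \<open>TGD B z H \<in> T\<close>] by (simp add: inst_def)
    ultimately have "inst (h(z := a)) H \<in> I"
      using TGP_atoms by blast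
    with \<open>active I (TGD B z H) h\<close> show ?thesis by auto
  qed
qed

lemma chase_within_model:
  assumes "is_chase T I C" "is_model T M" "I \<subseteq> M" "{at \<in> M. fst at \<in> TGPs T} \<subseteq> I"
  shows "C \<subseteq> M"
proof -
  obtain s where s: "s 0 = I" "\<forall>n. chase_step T (s n) (s (Suc n))" "C = (\<Union>n. s n)"
    using assms(1) unfolding is_chase_def by blast
  have I_stage: "I \<subseteq> s n" for n
    using monoD[OF chase_stages_mono[OF s(2)], of 0 n] s(1) by simp
  have "s n \<subseteq> M" for n
  proof (induction n)
    case 0
    with s(1) assms(3) show ?case by simp
  next
    case (Suc n)
    from assms(4) I_stage have "{at \<in> M. fst at \<in> TGPs T} \<subseteq> s n"
      by blast
    with Suc show ?case
      using chase_step_within_model[OF s(2)[rule_format] assms(2)] by blast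
  qed
  then show ?thesis
    using s(3) by blast
qed

lemma adom_inst_subset:
  assumes "set (snd H) \<subseteq> atom_vars B" "matches h B I"
  shows "set (snd (inst h H)) \<subseteq> adom I"
proof
  fix e assume "e \<in> set (snd (inst h H))"
  then obtain v where "v \<in> set (snd H)" "e = h v"
    by (auto simp: inst_def)
  then obtain b where "b \<in> set B" "v \<in> set (snd b)" "e \<in> set (snd (inst h b))"
    using assms(1) unfolding atom_vars_def by (auto simp: inst_def)
  with assms(2) show "e \<in> adom I"
    unfolding matches_def adom_def by blast
qed

lemma adom_chase_step:
  assumes step: "chase_step T I J" and wf: "\<forall>r\<in>T. wf_rule r"
  shows "adom J \<subseteq> adom I \<union> adom {at \<in> J. fst at \<in> TGPs T}"
proof
  fix e assume "e \<in> adom J"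
  then obtain at where at: "at \<in> J" "e \<in> set (snd at)"
    unfolding adom_def by blast
  from step \<open>at \<in> J\<close> show "e \<in> adom I \<union> adom {at \<in> J. fst at \<in> TGPs T}"
  proof (cases rule: chase_step_atomE)
    case 1
    with at(2) show ?thesis unfolding adom_def by blast
  next
    case (2 B H h)
    then have "wf_rule (Datalog B H)"
      using wf by blast
    then have "set (snd H) \<subseteq> atom_vars B"
      by simp
    with 2 at(2) show ?thesis
      using adom_inst_subset by blast
  next
    case (3 B z H h c)
    then have "fst at \<in> TGPs T"
      using head_pred_in_TGPs by (simp add: inst_def)
    with at show ?thesis unfolding adom_def by blast
  qed
qed

lemma adom_chase:
  assumes "is_chase T I C" "\<forall>r\<in>T. wf_rule r"
  shows "adom C \<subseteq> adom I \<union> adom {at \<in> C. fst at \<in> TGPs T}"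
proof -
  obtain s where s: "s 0 = I" "\<forall>n. chase_step T (s n) (s (Suc n))" "C = (\<Union>n. s n)"
    using assms(1) unfolding is_chase_def by blast
  have "adom (s n) \<subseteq> adom I \<union> adom {at \<in> C. fst at \<in> TGPs T}" for n
  proof (induction n)
    case 0
    with s(1) show ?case by simp
  next
    case (Suc n)
    have "{at \<in> s (Suc n). fst at \<in> TGPs T} \<subseteq> {at \<in> C. fst at \<in> TGPs T}"
      using s(3) by blast
    with Suc adom_chase_step[OF s(2)[rule_format] assms(2)] show ?case
      using adom_mono by blast
  qed
  then show ?thesis
    using s(3) unfolding adom_def by blast
qed

theorem lemma7:
  fixes ar :: "'p \<Rightarrow> nat"
    and T :: "('p,'v) rule set"
    and Q F :: 'p and xs :: "'v list" and y z :: 'v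
    and D CD :: "('p,'a) atom set"
  assumes sig: "binary_sig ar"
    and thy: "theory_over ar T"
    and bdd: "BDD ar T"
    and r0: "TGD [(Q, xs @ [y])] z (F, [y, z]) \<in> T"
    and F_only: "\<forall>r\<in>T. r \<noteq> TGD [(Q, xs @ [y])] z (F, [y, z]) \<longrightarrow> F \<notin> preds_rule r"
    and QF: "Q \<noteq> F"
    and a: "\<forall>B w H. TGD B w H \<in> T \<longrightarrow> (\<exists>R u. u \<noteq> w \<and> H = (R, [u, w]))"
    and b: "\<forall>B H. Datalog B H \<in> T \<longrightarrow> fst H \<notin> TGPs T"
    and D: "finite D" "over_sig ar D" "\<forall>at\<in>D. fst at \<noteq> F"
    and CD: "is_chase T D CD"
  shows "\<forall>CS. is_chase T {at \<in> CD. at \<in> D \<or> fst at \<in> TGPs T} CS \<longrightarrow>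
           CS \<subseteq> CD \<and> adom CS = adom CD
           \<and> adom {at \<in> CD. at \<in> D \<or> fst at \<in> TGPs T} = adom CD"
proof (intro allI impI)
  fix CS
  let ?S = "{at \<in> CD. at \<in> D \<or> fst at \<in> TGPs T}"
  assume CS: "is_chase T ?S CS"
  have wf: "\<forall>r\<in>T. wf_rule r"
    using thy unfolding theory_over_def by blast
  have "CS \<subseteq> CD"
    using chase_within_model[OF CS is_chase_model[OF CD]] by blast
  moreover have "adom CD \<subseteq> adom ?S"
    using adom_chase[OF CD wf] is_chase_start_subset[OF CD] unfolding adom_def by blast
  moreover have "adom ?S \<subseteq> adom CS"
    using adom_mono[OF is_chase_start_subset[OF CS]] .
  ultimately show "CS \<subseteq> CD \<and> adom CS = adom CD \<and> adom ?S = adom CD"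
    using adom_mono by blast
qed

end
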